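(* Let $P$ be a program of $\lambda_C$ and $CT$ a class table valid with respect to $P$. Suppose that 1. $CT;\Gamma\vdash e:A$, 2. $A\le TS$ (so $TS$ is nonempty), 3. $\Gamma\sim E$, 4. $TS\sim S$. Then at least one of the following holds: - (1) $e$ is a value; - (2) there exist $E',e',S'$ with $\langle E,e,S\rangle\to\langle E',e',S'\rangle$; - (3) $\langle E,e,S\rangle\to\mathit{blame}$.
   Context: Calculus $\lambda_C$ (syntax). There is a set of class IDs, ranged over by $A$. It contains the distinguished IDs $\mathrm{Nil}$, $\mathrm{Obj}$, $\mathrm{Bool}$, $\mathrm{True}$, $\mathrm{False}$, $\mathrm{Type}$. Class IDs serve as the types. Subtyping $\le$ is a partial order on class IDs forming a lattice with least element $\mathrm{Nil}$, greatest element $\mathrm{Obj}$ and join $\sqcup$ (so $\mathrm{Nil}\le A$, $A\le A$ and $A\le A\sqcup A'$ for all $A,A'$). Values are $v ::= \mathsf{nil} \mid [A] \mid A \mid \mathsf{true} \mid \mathsf{false}$. Here $[A]$ denotes an object instance of class $A$, and a class ID $A$ used as a value denotes a type. Expressions are $e ::= v \mid x \mid \mathsf{self}\mid\mathsf{tself}\mid e;e \mid A.\mathsf{new}\mid \mathsf{if}\ e\ \mathsf{then}\ e\ \mathsf{else}\ e \mid e == e \mid e.m(e) \mid \mathrm{chk}_{A}(e.m(e))$. Here $x$ ranges over variable IDs and $m$ over method IDs. $\mathsf{self}$ and $\mathsf{tself}$ are special variables. $\mathrm{chk}_A(e.m(e'))$ is a checked method call. Method types are $\sigma ::= A_1\to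 A_2$. Library method types are $\delta ::= \sigma \mid (a{:}e_1/A_1)\to e_2/A_2$ (a comp type). Programs are $P ::= \mathsf{def}\ A.m(x){:}\sigma = e \mid \mathsf{lib}\ A.m(x){:}\delta \mid P;P$. Method names $A.m$ are partitioned into two disjoint sets $\mathcal U$ (user-defined) and $\mathcal L$ (library). A class table $CT$ is a finite map from method names $A.m$ to library method types. Define $\mathrm{type\_of}(\mathsf{nil})=\mathrm{Nil}$, $\mathrm{type\_of}(A)=\mathrm{Type}$, $\mathrm{type\_of}(\mathsf{true})=\mathrm{True}$, $\mathrm{type\_of}(\mathsf{false})=\mathrm{False}$, $\mathrm{type\_of}([A])=A$. Evaluation contexts are $C ::= \square \mid C.m(e)\mid v.m(C)\mid \mathrm{chk}_A(C.m(e))\mid\mathrm{chk}_A(v.m(C))\mid C;e\mid \mathsf{if}\ C\ \mathsf{then}\ e\ \mathsf{else}\ e\mid C==e\mid v==C$. $C[e]$ denotes $C$ with its hole $\square$ replaced by $e$. An expression $e$ is called decomposable if $e=C'[e'']$ for some context $C'\neq\square$ and some expression $e''$ that is not a value. Dynamic semantics (relative to the fixed program $P$). A dynamic environment $E$ is a finite map from variables (including $\mathsf{self},\mathsf{tself}$) to values. A stack is $S ::= \cdot \mid (E,C)::S$. Configurations are triples $\langle E,e,S\rangle$ or the special outcome $\mathit{blame}$. Library methods are executed by a fixed function $\mathrm{call}(A.m,v_r,v)$ returning a value. Standing assumption: for every $A.m\in\mathcal L$ and all values $v_r,v$, it terminates and returns a value. The one-step relation $\to$ is given by the following rules. - $\langle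 E,x,S\rangle\to\langle E,E(x),S\rangle$, and likewise for $\mathsf{self}$ and $\mathsf{tself}$. - $\langle E,v;e,S\rangle\to\langle E,e,S\rangle$. - $\langle E,A.\mathsf{new},S\rangle\to\langle E,[A],S\rangle$. - $\langle E,\mathsf{if}\ v\ \mathsf{then}\ e_2\ \mathsf{else}\ e_3,S\rangle\to\langle E,e_2,S\rangle$ if $v\notin\{\mathsf{nil},\mathsf{false}\}$, and $\to\langle E,e_3,S\rangle$ otherwise. - $\langle E,v_1==v_2,S\rangle\to\langle E,\mathsf{true},S\rangle$ if $v_1=v_2$, and $\to\langle E,\mathsf{false},S\rangle$ otherwise. - (App-UD) $\langle E,C[v_r.m(v)],S\rangle\to\langle [\mathsf{self}\mapsto v_r,x\mapsto v],e,(E,C)::S\rangle$ if $\mathrm{type\_of}(v_r)=A$, $A.m\in\mathcal U$ and $P$ contains $\mathsf{def}\ A.m(x){:}\sigma=e$. - (App-Lib) $\langle E,\mathrm{chk}_{A'}(v_r.m(v)),S\rangle\to\langle E,v',S\rangle$ if $\mathrm{type\_of}(v_r)=A$, $A.m\in\mathcal L$, $v'=\mathrm{call}(A.m,v_r,v)$ and $\mathrm{type\_of}(v')\le A'$. - (Ret) $\langle E',v,(E,C)::S\rangle\to\langle E,C[v],S\rangle$. - (Context) If $\langle E,e,S\rangle\to\langle E',e',S'\rangle$, where $e$ is not a value, $e$ is not decomposable, and $e$ is not of the form $v_r.m(v)$ with $\mathrm{type\_of}(v_r).m\in\mathcal U$, then $\langle E,C[e],S\rangle\to\langle E',C[e'],S'\rangle$.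 - Blame. A call (checked or unchecked) whose receiver is $\mathsf{nil}$ steps to $\mathit{blame}$. A checked call $\mathrm{chk}_{A'}(v_r.m(v))$ with $\mathrm{type\_of}(v_r).m\in\mathcal L$ and $\mathrm{type\_of}(\mathrm{call}(\ldots))\not\le A'$ steps to $\mathit{blame}$. If $\langle E,e,S\rangle\to\mathit{blame}$ then $\langle E,C[e],S\rangle\to\mathit{blame}$. Type checking. A type environment $\Gamma$ is a finite map from variables (including $\mathsf{self},\mathsf{tself}$) to class IDs. The judgment $CT;\Gamma\vdash e:A$ is defined by the following rules. - $\mathsf{nil}:\mathrm{Nil}$; $[A]:A$; $\mathsf{true}:\mathrm{True}$; $\mathsf{false}:\mathrm{False}$; $A:\mathrm{Type}$; $A.\mathsf{new}:A$. - $x:\Gamma(x)$, $\mathsf{self}:\Gamma(\mathsf{self})$, $\mathsf{tself}:\Gamma(\mathsf{tself})$, when defined. - $e_1==e_2:\mathrm{Bool}$ if $e_1:A_1$ and $e_2:A_2$. - $e_1;e_2:A_2$ if $e_1:A_1$ and $e_2:A_2$. - $\mathsf{if}\ e_1\ \mathsf{then}\ e_2\ \mathsf{else}\ e_3:A_2\sqcup A_3$ if $e_i:A_i$. - $e_0.m(e_1):A_2$ if $e_0:A$, $A.m\in\mathcal U$, $e_1:A'$, $CT(A.m)=A_1\to A_2$ and $A'\le A_1$. - $\mathrm{chk}_{A'}(e_0.m(e_1)):A'$ if $e_0:A$ and $A.m\in\mathcal L$. - $\mathit{blame}:\mathrm{Nil}$. A context $C$ is typed by treating $\square$ as a variable,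 i.e. $CT;\Gamma[\square\mapsto A]\vdash C:A'$. Invariants. $\Gamma$ is consistent with $E$, written $\Gamma\sim E$, if $\mathrm{dom}(\Gamma)=\mathrm{dom}(E)$ and for each $x\in\mathrm{dom}(E)$ there is $A$ with $CT;\Gamma\vdash E(x):A$ and $A\le\Gamma(x)$. A type stack is $TS ::= \cdot\mid(\Gamma,A,A')::TS$. For nonempty type stacks, $A_0\le (\Gamma,A,A')::TS$ means $A_0\le A$. $(\Gamma,A,A')\sim(E,C)$ means $\Gamma\sim E$ and $CT;\Gamma[\square\mapsto A]\vdash C:A'$. $TS\sim S$ is defined inductively: $\cdot\sim\cdot$; and $(\Gamma,A,A')::TS\sim(E,C)::S$ iff $(\Gamma,A,A')\sim(E,C)$, $TS\sim S$, and $A'\le TS$ whenever $TS\ne\cdot$. Validity. $CT$ is valid with respect to $P$ if, for all method names $A.m$, the following hold. 1. If $A.m\in\mathcal U$, then $CT(A.m)=A_1\to A_2$ and $P$ contains exactly one definition $\mathsf{def}\ A.m(x){:}A_1\to A_2=e$, with $CT;[\mathsf{self}\mapsto A,x\mapsto A_1]\vdash e:A_2'$ for some $A_2'\le A_2$. 2. If $A.m\in\mathcal L$, then $A.m\in\mathrm{dom}(CT)$ and $P$ contains exactly one declaration $\mathsf{lib}\ A.m(x){:}\delta$ with $CT(A.m)=\delta$. 3. For every $A'\le A$, if $CT(A'.m)=A_1'\to A_2'$ and $CT(A.m)=A_1\to A_2$, then $A_1\le A_1'$ and $A_2'\le A_2$.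
   Formalization: The typing rule for $\mathrm{chk}_{A'}(e_0.m(e_1))$, also for contexts, has the extra premise that $e_1$ is typable; a call with receiver nil steps to blame only when its argument is a value. Apart from conventions, each condition added here is assumed in the paper as well or is needed for the statement above to hold. *)

theory Defs
  imports Main
begin

datatype 'u cid = CNil | CObj | CBool | CTrue | CFalse | CType | CUser 'u

datatype 'v var = V 'v | Self | TSelf

datatype 'u val = VNil | VInst "'u cid" | VCls "'u cid" | VTrue | VFalse

datatype ('u,'m,'v) expr =
    Val "'u val"
  | Var "'v var"
  | Seq "('u,'m,'v) expr" "('u,'m,'v) expr"
  | New "'u cid"
  | If "('u,'m,'v) expr" "('u,'m,'v) expr" "('u,'m,'v) expr"
  | Eq "('u,'m,'v) expr" "('u,'m,'v) expr"
  | Call "('u,'m,'v) expr" 'm "('u,'m,'v) expr"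
  | Chk "'u cid" "('u,'m,'v) expr" 'm "('u,'m,'v) expr"  \<comment> \<open>Chk A e0 m e1 = chk_A(e0.m(e1))\<close>

text \<open>Library method types delta: either an arrow type A1 -> A2 or a comp type (a:e1/A1) -> e2/A2.\<close>
datatype ('u,'m,'v) lty =
    LArr "'u cid" "'u cid"
  | LComp 'v "('u,'m,'v) expr" "'u cid" "('u,'m,'v) expr" "'u cid"

text \<open>Program declarations: Def A m x A1 A2 e is  def A.m(x):A1->A2 = e ;
  Lib A m x delta is  lib A.m(x):delta.  A program is a sequence of declarations.\<close>
datatype ('u,'m,'v) decl =
    Def "'u cid" 'm 'v "'u cid" "'u cid" "('u,'m,'v) expr"
  | Lib "'u cid" 'm 'v "('u,'m,'v) lty"

type_synonym ('u,'m,'v) prog = "('u,'m,'v) decl list"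

type_synonym ('u,'m,'v) ctable = "('u cid \<times> 'm) \<Rightarrow> ('u,'m,'v) lty option"

definition cid_lattice :: "('u cid \<Rightarrow> 'u cid \<Rightarrow> bool) \<Rightarrow> ('u cid \<Rightarrow> 'u cid \<Rightarrow> 'u cid) \<Rightarrow> bool" where
  "cid_lattice le join \<longleftrightarrow>
     (\<forall>A. le A A) \<and> (\<forall>A B C. le A B \<longrightarrow> le B C \<longrightarrow> le A C) \<and> (\<forall>A B. le A B \<longrightarrow> le B A \<longrightarrow> A = B)
   \<and> (\<forall>A. le CNil A) \<and> (\<forall>A. le A CObj)
   \<and> (\<forall>A B. le A (join A B) \<and> le B (join A B) \<and> (\<forall>C. le A C \<longrightarrow> le B C \<longrightarrow> le (join A B) C))
   \<and> (\<forall>A B. \<exists>M. le M A \<and> le M B \<and> (\<forall>C. le C A \<longrightarrow> le C B \<longrightarrow> le C M))"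

fun type_of :: "'u val \<Rightarrow> 'u cid" where
  "type_of VNil = CNil"
| "type_of (VCls A) = CType"
| "type_of VTrue = CTrue"
| "type_of VFalse = CFalse"
| "type_of (VInst A) = A"

fun is_val :: "('u,'m,'v) expr \<Rightarrow> bool" where
  "is_val (Val v) = True"
| "is_val _ = False"

datatype ('u,'m,'v) ctx =
    Hole
  | CCallL "('u,'m,'v) ctx" 'm "('u,'m,'v) expr"
  | CCallR "'u val" 'm "('u,'m,'v) ctx"
  | CChkL "'u cid" "('u,'m,'v) ctx" 'm "('u,'m,'v) expr"
  | CChkR "'u cid" "'u val" 'm "('u,'m,'v) ctx"
  | CSeq "('u,'m,'v) ctx" "('u,'m,'v) expr"
  | CIf "('u,'m,'v) ctx" "('u,'m,'v) expr" "('u,'m,'v) expr"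
  | CEqL "('u,'m,'v) ctx" "('u,'m,'v) expr"
  | CEqR "'u val" "('u,'m,'v) ctx"

fun fill :: "('u,'m,'v) ctx \<Rightarrow> ('u,'m,'v) expr \<Rightarrow> ('u,'m,'v) expr" where
  "fill Hole e = e"
| "fill (CCallL C m e') e = Call (fill C e) m e'"
| "fill (CCallR v m C) e = Call (Val v) m (fill C e)"
| "fill (CChkL A C m e') e = Chk A (fill C e) m e'"
| "fill (CChkR A v m C) e = Chk A (Val v) m (fill C e)"
| "fill (CSeq C e') e = Seq (fill C e) e'"
| "fill (CIf C e2 e3) e = If (fill C e) e2 e3"
| "fill (CEqL C e') e = Eq (fill C e) e'"
| "fill (CEqR v C) e = Eq (Val v) (fill C e)"

definition decomposable :: "('u,'m,'v) expr \<Rightarrow> bool" where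
  "decomposable e \<longleftrightarrow> (\<exists>C' e''. C' \<noteq> Hole \<and> e = fill C' e'' \<and> \<not> is_val e'')"

type_synonym ('u,'v) env = "'v var \<Rightarrow> 'u val option"
type_synonym ('u,'m,'v) stack = "(('u,'v) env \<times> ('u,'m,'v) ctx) list"

datatype ('u,'m,'v) config =
    Conf "('u,'v) env" "('u,'m,'v) expr" "('u,'m,'v) stack"
  | Blame

text \<open>isU A m: method name A.m is user-defined (otherwise it is a library method);
  call: the fixed library execution function; le: subtyping.\<close>
inductive step ::
  "('u,'m,'v) prog \<Rightarrow> ('u cid \<Rightarrow> 'm \<Rightarrow> bool) \<Rightarrow> ('u cid \<Rightarrow> 'm \<Rightarrow> 'u val \<Rightarrow> 'u val \<Rightarrow> 'u val)
   \<Rightarrow> ('u cid \<Rightarrow> 'u cid \<Rightarrow> bool) \<Rightarrow> ('u,'m,'v) config \<Rightarrow> ('u,'m,'v) config \<Rightarrow> bool"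
  for P isU call le where
  StVar: "E x = Some v \<Longrightarrow> step P isU call le (Conf E (Var x) S) (Conf E (Val v) S)"
| StSeq: "step P isU call le (Conf E (Seq (Val v) e) S) (Conf E e S)"
| StNew: "step P isU call le (Conf E (New A) S) (Conf E (Val (VInst A)) S)"
| StIfT: "v \<notin> {VNil, VFalse} \<Longrightarrow> step P isU call le (Conf E (If (Val v) e2 e3) S) (Conf E e2 S)"
| StIfF: "v \<in> {VNil, VFalse} \<Longrightarrow> step P isU call le (Conf E (If (Val v) e2 e3) S) (Conf E e3 S)"
| StEqT: "v1 = v2 \<Longrightarrow> step P isU call le (Conf E (Eq (Val v1) (Val v2)) S) (Conf E (Val VTrue) S)"
| StEqF: "v1 \<noteq> v2 \<Longrightarrow> step P isU call le (Conf E (Eq (Val v1) (Val v2)) S) (Conf E (Val VFalse) S)"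
| StAppUD: "\<lbrakk> type_of vr = A; isU A m; Def A m x A1 A2 e \<in> set P \<rbrakk> \<Longrightarrow>
     step P isU call le (Conf E (fill C (Call (Val vr) m (Val v))) S)
                        (Conf (Map.empty(Self \<mapsto> vr, V x \<mapsto> v)) e ((E, C) # S))"
| StAppLib: "\<lbrakk> type_of vr = A; \<not> isU A m; v' = call A m vr v; le (type_of v') A' \<rbrakk> \<Longrightarrow>
     step P isU call le (Conf E (Chk A' (Val vr) m (Val v)) S) (Conf E (Val v') S)"
| StRet: "step P isU call le (Conf E' (Val v) ((E, C) # S)) (Conf E (fill C (Val v)) S)"
| StCtx: "\<lbrakk> step P isU call le (Conf E e S) (Conf E' e' S'); \<not> is_val e; \<not> decomposable e;
            \<not> (\<exists>vr m v. e = Call (Val vr) m (Val v) \<and> isU (type_of vr) m) \<rbrakk> \<Longrightarrow>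
     step P isU call le (Conf E (fill C e) S) (Conf E' (fill C e') S')"
| StBlameNil: "step P isU call le (Conf E (Call (Val VNil) m (Val v)) S) Blame"
| StBlameNilChk: "step P isU call le (Conf E (Chk A' (Val VNil) m (Val v)) S) Blame"
| StBlameChk: "\<lbrakk> \<not> isU (type_of vr) m; \<not> le (type_of (call (type_of vr) m vr v)) A' \<rbrakk> \<Longrightarrow>
     step P isU call le (Conf E (Chk A' (Val vr) m (Val v)) S) Blame"
| StBlameCtx: "step P isU call le (Conf E e S) Blame \<Longrightarrow>
     step P isU call le (Conf E (fill C e) S) Blame"

type_synonym ('u,'v) tenv = "'v var \<Rightarrow> 'u cid option"

inductive typing ::
  "('u,'m,'v) ctable \<Rightarrow> ('u cid \<Rightarrow> 'm \<Rightarrow> bool) \<Rightarrow> ('u cid \<Rightarrow> 'u cid \<Rightarrow> bool) \<Rightarrow> ('u cid \<Rightarrow> 'u cid \<Rightarrow> 'u cid)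
   \<Rightarrow> ('u,'v) tenv \<Rightarrow> ('u,'m,'v) expr \<Rightarrow> 'u cid \<Rightarrow> bool"
  for CT isU le join where
  TVal: "typing CT isU le join \<Gamma> (Val v) (type_of v)"
| TNew: "typing CT isU le join \<Gamma> (New A) A"
| TVar: "\<Gamma> x = Some A \<Longrightarrow> typing CT isU le join \<Gamma> (Var x) A"
| TEq: "\<lbrakk> typing CT isU le join \<Gamma> e1 A1; typing CT isU le join \<Gamma> e2 A2 \<rbrakk> \<Longrightarrow>
     typing CT isU le join \<Gamma> (Eq e1 e2) CBool"
| TSeq: "\<lbrakk> typing CT isU le join \<Gamma> e1 A1; typing CT isU le join \<Gamma> e2 A2 \<rbrakk> \<Longrightarrow>
     typing CT isU le join \<Gamma> (Seq e1 e2) A2"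
| TIf: "\<lbrakk> typing CT isU le join \<Gamma> e1 A1; typing CT isU le join \<Gamma> e2 A2; typing CT isU le join \<Gamma> e3 A3 \<rbrakk> \<Longrightarrow>
     typing CT isU le join \<Gamma> (If e1 e2 e3) (join A2 A3)"
| TCall: "\<lbrakk> typing CT isU le join \<Gamma> e0 A; isU A m; typing CT isU le join \<Gamma> e1 A';
            CT (A, m) = Some (LArr A1 A2); le A' A1 \<rbrakk> \<Longrightarrow>
     typing CT isU le join \<Gamma> (Call e0 m e1) A2"
| TChk: "\<lbrakk> typing CT isU le join \<Gamma> e0 A; \<not> isU A m; typing CT isU le join \<Gamma> e1 A'' \<rbrakk> \<Longrightarrow>
     typing CT isU le join \<Gamma> (Chk A' e0 m e1) A'"

text \<open>Typing of contexts, treating the hole as a variable of type A.\<close>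
inductive ctx_typing ::
  "('u,'m,'v) ctable \<Rightarrow> ('u cid \<Rightarrow> 'm \<Rightarrow> bool) \<Rightarrow> ('u cid \<Rightarrow> 'u cid \<Rightarrow> bool) \<Rightarrow> ('u cid \<Rightarrow> 'u cid \<Rightarrow> 'u cid)
   \<Rightarrow> ('u,'v) tenv \<Rightarrow> 'u cid \<Rightarrow> ('u,'m,'v) ctx \<Rightarrow> 'u cid \<Rightarrow> bool"
  for CT isU le join where
  CTHole: "ctx_typing CT isU le join \<Gamma> A Hole A"
| CTCallL: "\<lbrakk> ctx_typing CT isU le join \<Gamma> A C A0; isU A0 m; typing CT isU le join \<Gamma> e1 A';
              CT (A0, m) = Some (LArr A1 A2); le A' A1 \<rbrakk> \<Longrightarrow>
     ctx_typing CT isU le join \<Gamma> A (CCallL C m e1) A2"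
| CTCallR: "\<lbrakk> typing CT isU le join \<Gamma> (Val v) A0; isU A0 m; ctx_typing CT isU le join \<Gamma> A C A';
              CT (A0, m) = Some (LArr A1 A2); le A' A1 \<rbrakk> \<Longrightarrow>
     ctx_typing CT isU le join \<Gamma> A (CCallR v m C) A2"
| CTChkL: "\<lbrakk> ctx_typing CT isU le join \<Gamma> A C A0; \<not> isU A0 m; typing CT isU le join \<Gamma> e1 A'' \<rbrakk> \<Longrightarrow>
     ctx_typing CT isU le join \<Gamma> A (CChkL A' C m e1) A'"
| CTChkR: "\<lbrakk> typing CT isU le join \<Gamma> (Val v) A0; \<not> isU A0 m; ctx_typing CT isU le join \<Gamma> A C A'' \<rbrakk> \<Longrightarrow>
     ctx_typing CT isU le join \<Gamma> A (CChkR A' v m C) A'"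
| CTSeq: "\<lbrakk> ctx_typing CT isU le join \<Gamma> A C A1; typing CT isU le join \<Gamma> e2 A2 \<rbrakk> \<Longrightarrow>
     ctx_typing CT isU le join \<Gamma> A (CSeq C e2) A2"
| CTIf: "\<lbrakk> ctx_typing CT isU le join \<Gamma> A C A1; typing CT isU le join \<Gamma> e2 A2; typing CT isU le join \<Gamma> e3 A3 \<rbrakk> \<Longrightarrow>
     ctx_typing CT isU le join \<Gamma> A (CIf C e2 e3) (join A2 A3)"
| CTEqL: "\<lbrakk> ctx_typing CT isU le join \<Gamma> A C A1; typing CT isU le join \<Gamma> e2 A2 \<rbrakk> \<Longrightarrow>
     ctx_typing CT isU le join \<Gamma> A (CEqL C e2) CBool"
| CTEqR: "\<lbrakk> typing CT isU le join \<Gamma> (Val v) A1; ctx_typing CT isU le join \<Gamma> A C A2 \<rbrakk> \<Longrightarrow>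
     ctx_typing CT isU le join \<Gamma> A (CEqR v C) CBool"

definition env_consistent ::
  "('u,'m,'v) ctable \<Rightarrow> ('u cid \<Rightarrow> 'm \<Rightarrow> bool) \<Rightarrow> ('u cid \<Rightarrow> 'u cid \<Rightarrow> bool) \<Rightarrow> ('u cid \<Rightarrow> 'u cid \<Rightarrow> 'u cid)
   \<Rightarrow> ('u,'v) tenv \<Rightarrow> ('u,'v) env \<Rightarrow> bool" where
  "env_consistent CT isU le join \<Gamma> E \<longleftrightarrow>
     dom \<Gamma> = dom E \<and>
     (\<forall>x \<in> dom E. \<exists>A. typing CT isU le join \<Gamma> (Val (the (E x))) A \<and> le A (the (\<Gamma> x)))"

type_synonym ('u,'v) tstack = "(('u,'v) tenv \<times> 'u cid \<times> 'u cid) list"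

text \<open>A0 <= TS, only meaningful (true) for a nonempty type stack.\<close>
fun le_ts :: "('u cid \<Rightarrow> 'u cid \<Rightarrow> bool) \<Rightarrow> 'u cid \<Rightarrow> ('u,'v) tstack \<Rightarrow> bool" where
  "le_ts le A0 [] = False"
| "le_ts le A0 ((\<Gamma>, A, A') # TS) = le A0 A"

fun stack_consistent ::
  "('u,'m,'v) ctable \<Rightarrow> ('u cid \<Rightarrow> 'm \<Rightarrow> bool) \<Rightarrow> ('u cid \<Rightarrow> 'u cid \<Rightarrow> bool) \<Rightarrow> ('u cid \<Rightarrow> 'u cid \<Rightarrow> 'u cid)
   \<Rightarrow> ('u,'v) tstack \<Rightarrow> ('u,'m,'v) stack \<Rightarrow> bool" where
  "stack_consistent CT isU le join [] [] = True"
| "stack_consistent CT isU le join ((\<Gamma>, A, A') # TS) ((E, C) # S) =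
     (env_consistent CT isU le join \<Gamma> E \<and> ctx_typing CT isU le join \<Gamma> A C A'
      \<and> stack_consistent CT isU le join TS S \<and> (TS \<noteq> [] \<longrightarrow> le_ts le A' TS))"
| "stack_consistent CT isU le join _ _ = False"

fun is_def_of :: "'u cid \<Rightarrow> 'm \<Rightarrow> ('u,'m,'v) decl \<Rightarrow> bool" where
  "is_def_of A m (Def A' m' x A1 A2 e) = (A' = A \<and> m' = m)"
| "is_def_of A m (Lib _ _ _ _) = False"

fun is_lib_of :: "'u cid \<Rightarrow> 'm \<Rightarrow> ('u,'m,'v) decl \<Rightarrow> bool" where
  "is_lib_of A m (Lib A' m' x d) = (A' = A \<and> m' = m)"
| "is_lib_of A m (Def _ _ _ _ _ _) = False"

definition valid_ct ::
  "('u,'m,'v) ctable \<Rightarrow> ('u cid \<Rightarrow> 'm \<Rightarrow> bool) \<Rightarrow> ('u cid \<Rightarrow> 'u cid \<Rightarrow> bool) \<Rightarrow> ('u cid \<Rightarrow> 'u cid \<Rightarrow> 'u cid)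
   \<Rightarrow> ('u,'m,'v) prog \<Rightarrow> bool" where
  "valid_ct CT isU le join P \<longleftrightarrow>
     (\<forall>A m. isU A m \<longrightarrow>
        (\<exists>A1 A2 x e A2'. CT (A, m) = Some (LArr A1 A2)
           \<and> filter (is_def_of A m) P = [Def A m x A1 A2 e]
           \<and> typing CT isU le join (Map.empty(Self \<mapsto> A, V x \<mapsto> A1)) e A2' \<and> le A2' A2))
   \<and> (\<forall>A m. \<not> isU A m \<longrightarrow>
        (A, m) \<in> dom CT \<and> (\<exists>x. filter (is_lib_of A m) P = [Lib A m x (the (CT (A, m)))]))
   \<and> (\<forall>A A' m A1 A2 A1' A2'. le A' A \<longrightarrow> CT (A', m) = Some (LArr A1' A2') \<longrightarrow>
        CT (A, m) = Some (LArr A1 A2) \<longrightarrow> le A1 A1' \<and> le A2' A2)"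

end

theory Submission
  imports Defs
begin

text \<open>Progress is proved for an expression placed in an arbitrary evaluation context C, by
  induction on its typing derivation. If an argument in evaluation position is not a value, the
  induction hypothesis applies to it in C extended by one frame. Otherwise the expression is a
  redex, and its typing guarantees that it fires: a variable is bound since the environment covers
  the type environment, a user-defined call finds its definition since the class table is valid,
  and a checked library call either returns or blames. Primitive steps and blame lift into C.\<close>

fun ctx_comp :: "('u,'m,'v) ctx \<Rightarrow> ('u,'m,'v) ctx \<Rightarrow> ('u,'m,'v) ctx" where
  "ctx_comp Hole D = D"
| "ctx_comp (CCallL C m e') D = CCallL (ctx_comp C D) m e'"
| "ctx_comp (CCallR v m C) D = CCallR v m (ctx_comp C D)"
| "ctx_comp (CChkL A C m e') D = CChkL A (ctx_comp C D) m e'"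
| "ctx_comp (CChkR A v m C) D = CChkR A v m (ctx_comp C D)"
| "ctx_comp (CSeq C e') D = CSeq (ctx_comp C D) e'"
| "ctx_comp (CIf C e2 e3) D = CIf (ctx_comp C D) e2 e3"
| "ctx_comp (CEqL C e') D = CEqL (ctx_comp C D) e'"
| "ctx_comp (CEqR v C) D = CEqR v (ctx_comp C D)"

lemma fill_ctx_comp: "fill (ctx_comp C D) e = fill C (fill D e)"
  by (induction C) auto

lemma is_val_iff: "is_val e \<longleftrightarrow> (\<exists>v. e = Val v)"
  by (cases e) auto

lemma fill_eq_Val_iff: "fill C e = Val v \<longleftrightarrow> C = Hole \<and> e = Val v"
  by (cases C) auto

lemma not_decomposable_redex:
  "\<not> decomposable (Var x)"
  "\<not> decomposable (New A)"
  "\<not> decomposable (Seq (Val v) e)"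
  "\<not> decomposable (If (Val v) e2 e3)"
  "\<not> decomposable (Eq (Val v1) (Val v2))"
  "\<not> decomposable (Chk A (Val v1) m (Val v2))"
  unfolding decomposable_def
  by (auto simp: eq_commute[of _ "fill _ _"] fill_eq_Val_iff elim!: fill.elims)

definition progresses ::
  "('u,'m,'v) prog \<Rightarrow> ('u cid \<Rightarrow> 'm \<Rightarrow> bool) \<Rightarrow> ('u cid \<Rightarrow> 'm \<Rightarrow> 'u val \<Rightarrow> 'u val \<Rightarrow> 'u val)
   \<Rightarrow> ('u cid \<Rightarrow> 'u cid \<Rightarrow> bool) \<Rightarrow> ('u,'v) env \<Rightarrow> ('u,'m,'v) expr \<Rightarrow> ('u,'m,'v) stack \<Rightarrow> bool" where
  "progresses P isU call le E e S \<longleftrightarrow>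
     (\<exists>E' e' S'. step P isU call le (Conf E e S) (Conf E' e' S')) \<or> step P isU call le (Conf E e S) Blame"

lemma progresses_fill_redex:
  assumes "step P isU call le (Conf E r S) (Conf E' r' S')" "\<not> is_val r" "\<not> decomposable r"
    "\<not> (\<exists>vr m v. r = Call (Val vr) m (Val v) \<and> isU (type_of vr) m)"
  shows "progresses P isU call le E (fill C r) S"
  using StCtx[OF assms] unfolding progresses_def by blast

lemma progresses_fill_blame:
  "step P isU call le (Conf E r S) Blame \<Longrightarrow> progresses P isU call le E (fill C r) S"
  unfolding progresses_def by (blast intro: StBlameCtx)

lemma typing_Val_type_of: "typing CT isU le join \<Gamma> (Val v) A \<Longrightarrow> A = type_of v"
  by (erule typing.cases) auto

lemma valid_ct_has_def:
  "valid_ct CT isU le join P \<Longrightarrow> isU A m \<Longrightarrow> \<exists>x A1 A2 e. Def A m x A1 A2 e \<in> set P"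
  unfolding valid_ct_def by (metis filter_is_subset list.set_intros(1) subsetD)

lemma progresses_fill_Var:
  "x \<in> dom E \<Longrightarrow> progresses P isU call le E (fill C (Var x)) S"
  using progresses_fill_redex[OF StVar] by (auto simp: not_decomposable_redex)

lemma progresses_fill_New: "progresses P isU call le E (fill C (New A)) S"
  by (rule progresses_fill_redex[OF StNew]) (auto simp: not_decomposable_redex)

lemma progresses_fill_Seq: "progresses P isU call le E (fill C (Seq (Val v) e)) S"
  by (rule progresses_fill_redex[OF StSeq]) (auto simp: not_decomposable_redex)

lemma progresses_fill_If: "progresses P isU call le E (fill C (If (Val v) e2 e3)) S"
proof -
  obtain r where "step P isU call le (Conf E (If (Val v) e2 e3) S) (Conf E r S)"
    using StIfT[of v] StIfF[of v] by blast
  from progresses_fill_redex[OF this] show ?thesis by (auto simp: not_decomposable_redex)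
qed

lemma progresses_fill_Eq: "progresses P isU call le E (fill C (Eq (Val v1) (Val v2))) S"
proof -
  obtain r where "step P isU call le (Conf E (Eq (Val v1) (Val v2)) S) (Conf E r S)"
    using StEqT[of v1 v2] StEqF[of v1 v2] by blast
  from progresses_fill_redex[OF this] show ?thesis by (auto simp: not_decomposable_redex)
qed

lemma progresses_fill_Call:
  assumes "isU (type_of v0) m" and "Def (type_of v0) m x A1 A2 e \<in> set P"
  shows "progresses P isU call le E (fill C (Call (Val v0) m (Val v1))) S"
  using StAppUD[of v0 "type_of v0" isU m, OF refl assms] unfolding progresses_def by blast

lemma progresses_fill_Chk:
  assumes lib: "\<not> isU (type_of v0) m"
  shows "progresses P isU call le E (fill C (Chk A' (Val v0) m (Val v1))) S"
proof (cases "le (type_of (call (type_of v0) m v0 v1)) A'")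
  case True
  have "step P isU call le (Conf E (Chk A' (Val v0) m (Val v1)) S)
      (Conf E (Val (call (type_of v0) m v0 v1)) S)"
    by (rule StAppLib) (use lib True in auto)
  from progresses_fill_redex[OF this] show ?thesis by (auto simp: not_decomposable_redex)
next
  case False
  have "step P isU call le (Conf E (Chk A' (Val v0) m (Val v1)) S) Blame"
    by (rule StBlameChk) (use lib False in auto)
  then show ?thesis by (rule progresses_fill_blame)
qed

lemma progress_in_ctx:
  assumes defs: "\<And>A m. isU A m \<Longrightarrow> \<exists>x A1 A2 e. Def A m x A1 A2 e \<in> set P"
  shows "typing CT isU le join \<Gamma> e A \<Longrightarrow> dom \<Gamma> \<subseteq> dom E \<Longrightarrow> \<not> is_val e \<Longrightarrow>
    progresses P isU call le E (fill C e) S"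
proof (induction arbitrary: C rule: typing.induct)
  case (TVar \<Gamma> x A)
  then show ?case by (blast intro: progresses_fill_Var)
next
  case (TEq \<Gamma> e1 A1 e2 A2)
  consider "\<not> is_val e1" | v1 where "e1 = Val v1" "\<not> is_val e2"
    | v1 v2 where "e1 = Val v1" "e2 = Val v2"
    using is_val_iff by blast
  then show ?case
  proof cases
    case 1
    with TEq.IH(1)[of "ctx_comp C (CEqL Hole e2)"] TEq.prems show ?thesis
      by (simp add: fill_ctx_comp)
  next
    case 2
    with TEq.IH(2)[of "ctx_comp C (CEqR v1 Hole)"] TEq.prems show ?thesis
      by (simp add: fill_ctx_comp)
  qed (simp add: progresses_fill_Eq)
next
  case (TSeq \<Gamma> e1 A1 e2 A2)
  then show ?case
    using TSeq.IH(1)[of "ctx_comp C (CSeq Hole e2)"]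
    by (cases "is_val e1") (auto simp: is_val_iff fill_ctx_comp progresses_fill_Seq)
next
  case (TIf \<Gamma> e1 A1 e2 A2 e3 A3)
  then show ?case
    using TIf.IH(1)[of "ctx_comp C (CIf Hole e2 e3)"]
    by (cases "is_val e1") (auto simp: is_val_iff fill_ctx_comp progresses_fill_If)
next
  case (TCall \<Gamma> e0 A0 m e1 A' A1 A2)
  consider "\<not> is_val e0" | v0 where "e0 = Val v0" "\<not> is_val e1"
    | v0 v1 where "e0 = Val v0" "e1 = Val v1"
    using is_val_iff by blast
  then show ?case
  proof cases
    case 1
    with TCall.IH(1)[of "ctx_comp C (CCallL Hole m e1)"] TCall.prems show ?thesis
      by (simp add: fill_ctx_comp)
  next
    case 2
    with TCall.IH(2)[of "ctx_comp C (CCallR v0 m Hole)"] TCall.prems show ?thesis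
      by (simp add: fill_ctx_comp)
  next
    case 3
    with TCall.hyps(1) have "type_of v0 = A0" by (auto dest: typing_Val_type_of)
    with defs[OF TCall.hyps(2)] TCall.hyps(2) 3 show ?thesis
      by (auto intro: progresses_fill_Call)
  qed
next
  case (TChk \<Gamma> e0 A0 m e1 A'' A')
  consider "\<not> is_val e0" | v0 where "e0 = Val v0" "\<not> is_val e1"
    | v0 v1 where "e0 = Val v0" "e1 = Val v1"
    using is_val_iff by blast
  then show ?case
  proof cases
    case 1
    with TChk.IH(1)[of "ctx_comp C (CChkL A' Hole m e1)"] TChk.prems show ?thesis
      by (simp add: fill_ctx_comp)
  next
    case 2
    with TChk.IH(2)[of "ctx_comp C (CChkR A' v0 m Hole)"] TChk.prems show ?thesis
      by (simp add: fill_ctx_comp)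
  next
    case 3
    with TChk.hyps show ?thesis by (auto dest: typing_Val_type_of intro: progresses_fill_Chk)
  qed
qed (auto intro: progresses_fill_New)

theorem mainTheorem3:
  fixes P :: "('u,'m,'v) prog"
    and CT :: "('u,'m,'v) ctable"
    and isU :: "'u cid \<Rightarrow> 'm \<Rightarrow> bool"
    and call :: "'u cid \<Rightarrow> 'm \<Rightarrow> 'u val \<Rightarrow> 'u val \<Rightarrow> 'u val"
    and le :: "'u cid \<Rightarrow> 'u cid \<Rightarrow> bool"
    and join :: "'u cid \<Rightarrow> 'u cid \<Rightarrow> 'u cid"
    and \<Gamma> :: "('u,'v) tenv" and E :: "('u,'v) env"
    and TS :: "('u,'v) tstack" and S :: "('u,'m,'v) stack"
    and e :: "('u,'m,'v) expr" and A :: "'u cid"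
  assumes lat: "cid_lattice le join"
    and valid: "valid_ct CT isU le join P"
    and typed: "typing CT isU le join \<Gamma> e A"
    and le_TS: "le_ts le A TS"
    and envc: "env_consistent CT isU le join \<Gamma> E"
    and stackc: "stack_consistent CT isU le join TS S"
  shows "is_val e
         \<or> (\<exists>E' e' S'. step P isU call le (Conf E e S) (Conf E' e' S'))
         \<or> step P isU call le (Conf E e S) Blame"
proof -
  have "dom \<Gamma> \<subseteq> dom E"
    using envc by (simp add: env_consistent_def)
  then have "\<not> is_val e \<Longrightarrow> progresses P isU call le E (fill Hole e) S"
    using progress_in_ctx[OF valid_ct_has_def[OF valid] typed] by blast
  then show ?thesis unfolding progresses_def by auto
qed

end
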